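(* Let $k$ be an odd positive integer. Then $$\sum_{n=1}^{k}\frac{\cos^2(\pi n/k)}{\cos^4(2\pi n/k)}=\begin{cases}\dfrac{k}{12}\,(3+4k+3k^2+2k^3), & k\equiv 1 \pmod 4,\\[2mm] \dfrac{k}{12}\,(-3+4k-3k^2+2k^3), & k\equiv 3 \pmod 4.\end{cases}$$ *)

theory Defs
  imports Complex_Main
begin

end

theory Submission
  imports Defs
begin

text \<open>
  Put \<open>\<omega> = cis (2\<pi>/k)\<close> and \<open>y = \<i>\<omega>\<^sup>n\<close>. Then \<open>cos (2\<pi>n/k) = \<i>(1 - y\<^sup>2)/(2y)\<close>, and a partial
  fraction expansion writes each summand as a linear combination of the first four powers of
  \<open>1/(1 - y)\<close> and \<open>1/(1 + y)\<close>. So it suffices to know the sums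
  \<open>E\<^sub>j = \<Sum>\<^sub>n (1 - c\<omega>\<^sup>n)\<^sup>-\<^sup>j\<close> for \<open>c = \<plusminus>\<i>\<close> and \<open>j \<le> 4\<close>. Every \<open>t = 1 - c\<omega>\<^sup>n\<close> satisfies
  \<open>(1 - t)\<^sup>k = c\<^sup>k\<close>; expanding binomially, dividing by \<open>t\<^sup>j\<close> and summing over \<open>n\<close> (where the
  nonnegative powers of \<open>t\<close> sum to \<open>k\<close>, as \<open>\<omega>\<close> is a primitive root of unity) gives a
  triangular linear recurrence for the \<open>E\<^sub>j\<close>. Since \<open>c\<^sup>k = \<plusminus>\<i>\<close>, with the sign
  determined by \<open>k mod 4\<close>, it can be solved explicitly.
\<close>

lemma of_nat_choose_2: "(of_nat (k choose 2) :: 'a::field_char_0) = of_nat k * (of_nat k - 1) / 2"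
  by (simp add: binomial_gbinomial gbinomial_Suc numeral_2_eq_2 fact_numeral)

lemma of_nat_choose_3:
  "(of_nat (k choose 3) :: 'a::field_char_0) = of_nat k * (of_nat k - 1) * (of_nat k - 2) / 6"
  by (simp add: binomial_gbinomial gbinomial_Suc numeral_3_eq_3 fact_numeral atLeast0_atMost_Suc algebra_simps)

lemma alternating_binomial_sum_from:
  assumes "0 < k"
  shows "(\<Sum>i=j..k+j. of_nat (k choose i) * (-1) ^ i :: 'a::comm_ring_1)
    = - (\<Sum>i<j. of_nat (k choose i) * (-1) ^ i)"
proof -
  let ?f = "\<lambda>i. of_nat (k choose i) * (-1) ^ i :: 'a"
  have "0 = (\<Sum>i\<le>k. ?f i)"
    using choose_alternating_sum[OF assms, where 'a='a] by (simp add: mult.commute)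
  also have "\<dots> = (\<Sum>i\<le>k+j. ?f i)" by (rule sum.mono_neutral_left) (auto simp: binomial_eq_0)
  also have "{..k+j} = {..<j} \<union> {j..k+j}" by auto
  also have "sum ?f \<dots> = sum ?f {..<j} + sum ?f {j..k+j}" by (rule sum.union_disjoint) auto
  finally show ?thesis by (simp add: eq_neg_iff_add_eq_0 add.commute)
qed

text \<open>The upper limit \<open>k + j\<close> instead of \<open>k\<close> keeps the split valid when \<open>j > k\<close>; the extra
  terms vanish.\<close>

lemma binomial_expansion_over_power:
  fixes t :: "'a::field"
  assumes "t \<noteq> 0" and "1 \<le> j"
  shows "((1 - t) ^ k - 1) / t ^ j = (\<Sum>i=1..<j. of_nat (k choose i) * (-1) ^ i / t ^ (j - i))
    + (\<Sum>i=j..k+j. of_nat (k choose i) * (-1) ^ i * t ^ (i - j))"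
proof -
  let ?f = "\<lambda>i. of_nat (k choose i) * (-1) ^ i * t ^ i :: 'a"
  have "(1 - t) ^ k = (- t + 1) ^ k" by simp
  also have "\<dots> = (\<Sum>i\<le>k. ?f i)"
    unfolding binomial_ring by (intro sum.cong refl) (simp add: power_minus[of t])
  also have "\<dots> = (\<Sum>i\<le>k+j. ?f i)"
    by (rule sum.mono_neutral_left) (simp_all add: binomial_eq_0)
  also have "{..k+j} = insert 0 ({1..<j} \<union> {j..k+j})" using assms by auto
  also have "sum ?f \<dots> = ?f 0 + (sum ?f {1..<j} + sum ?f {j..k+j})"
    using assms by (subst sum.insert) (auto intro: sum.union_disjoint)
  finally have "((1 - t) ^ k - 1) / t ^ j = sum ?f {1..<j} / t ^ j + sum ?f {j..k+j} / t ^ j"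
    by (simp add: add_divide_distrib)
  also have "sum ?f {1..<j} / t ^ j = (\<Sum>i=1..<j. of_nat (k choose i) * (-1) ^ i / t ^ (j - i))"
    unfolding sum_divide_distrib
  proof (intro sum.cong refl)
    fix i assume "i \<in> {1..<j}"
    then have "t ^ j = t ^ i * t ^ (j - i)" by (simp flip: power_add)
    then show "?f i / t ^ j = of_nat (k choose i) * (-1) ^ i / t ^ (j - i)"
      using assms by (simp add: field_simps)
  qed
  also have "sum ?f {j..k+j} / t ^ j = (\<Sum>i=j..k+j. of_nat (k choose i) * (-1) ^ i * t ^ (i - j))"
    unfolding sum_divide_distrib
  proof (intro sum.cong refl)
    fix i assume "i \<in> {j..k+j}"
    then have "t ^ i = t ^ j * t ^ (i - j)" by (simp flip: power_add)
    then show "?f i / t ^ j = of_nat (k choose i) * (-1) ^ i * t ^ (i - j)"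
      using assms by (simp add: field_simps)
  qed
  finally show ?thesis .
qed

definition primitive_root_of_unity :: "nat \<Rightarrow> 'a::comm_ring_1 \<Rightarrow> bool" where
  "primitive_root_of_unity k w \<longleftrightarrow> 0 < k \<and> w ^ k = 1 \<and> (\<forall>l. 0 < l \<longrightarrow> l < k \<longrightarrow> w ^ l \<noteq> 1)"

lemma primitive_root_of_unity_cis:
  assumes "0 < k"
  shows "primitive_root_of_unity k (cis (2 * pi / real k))"
proof -
  have root: "cis (2 * pi / real k) ^ l = cis (2 * pi * real l / real k)" for l
    by (simp add: DeMoivre mult_ac)
  have "l = 0" if "l < k" "cis (2 * pi * real l / real k) = 1" for l
    using inj_onD[OF bij_betw_imp_inj_on[OF bij_betw_roots_unity[OF assms]], of l 0] that assms
    by simp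
  with assms show ?thesis
    unfolding primitive_root_of_unity_def root by (auto simp: complex_eq_iff)
qed

lemma sum_powers_primitive_root_of_unity:
  fixes w :: "'a::field"
  assumes "primitive_root_of_unity k w" "0 < l" "l < k"
  shows "(\<Sum>n<k. (w ^ n) ^ l) = 0"
proof -
  have "(w ^ l) ^ k = (w ^ k) ^ l" by (simp flip: power_mult add: mult.commute)
  then have "w ^ l \<noteq> 1" "(w ^ l) ^ k = 1"
    using assms by (auto simp: primitive_root_of_unity_def)
  then have "(\<Sum>n<k. (w ^ l) ^ n) = 0" by (simp add: geometric_sum)
  then show ?thesis by (simp flip: power_mult add: mult.commute)
qed

lemma sum_power_one_minus_mult_primitive_root:
  fixes w c :: "'a::field"
  assumes w: "primitive_root_of_unity k w" and "m < k"
  shows "(\<Sum>n<k. (1 - c * w ^ n) ^ m) = of_nat k"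
proof -
  have "(1 - c * w ^ n) ^ m = (\<Sum>l\<le>m. of_nat (m choose l) * (- c) ^ l * (w ^ n) ^ l)" for n
  proof -
    have "(1 - c * w ^ n) ^ m = (- c * w ^ n + 1) ^ m" by simp
    also have "\<dots> = (\<Sum>l\<le>m. of_nat (m choose l) * (- c * w ^ n) ^ l * 1 ^ (m - l))"
      by (rule binomial_ring)
    finally show ?thesis by (simp only: power_mult_distrib power_one mult_1_right mult.assoc)
  qed
  then have "(\<Sum>n<k. (1 - c * w ^ n) ^ m) = (\<Sum>n<k. \<Sum>l\<le>m. of_nat (m choose l) * (- c) ^ l * (w ^ n) ^ l)"
    by simp
  also have "\<dots> = (\<Sum>l\<le>m. of_nat (m choose l) * (- c) ^ l * (\<Sum>n<k. (w ^ n) ^ l))"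
    by (subst sum.swap) (simp add: sum_distrib_left)
  also have "\<dots> = (\<Sum>l\<in>{0}. of_nat (m choose l) * (- c) ^ l * (\<Sum>n<k. (w ^ n) ^ l))"
    using assms by (intro sum.mono_neutral_right) (auto simp: sum_powers_primitive_root_of_unity)
  finally show ?thesis by simp
qed

definition inverse_power_sum :: "nat \<Rightarrow> 'a::field \<Rightarrow> 'a \<Rightarrow> nat \<Rightarrow> 'a" where
  "inverse_power_sum k w c j = (\<Sum>n<k. 1 / (1 - c * w ^ n) ^ j)"

lemma inverse_power_sum_recurrence:
  fixes w c :: "'a::field"
  assumes w: "primitive_root_of_unity k w" and c: "c ^ k \<noteq> 1" and j: "1 \<le> j"
  shows "(c ^ k - 1) * inverse_power_sum k w c j =
    (\<Sum>i=1..<j. of_nat (k choose i) * (-1) ^ i * inverse_power_sum k w c (j - i))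
    - of_nat k * (\<Sum>i<j. of_nat (k choose i) * (-1) ^ i)"
proof -
  let ?t = "\<lambda>n. 1 - c * w ^ n"
  have k: "0 < k" and wk: "w ^ k = 1" using w by (auto simp: primitive_root_of_unity_def)
  have tk: "(1 - ?t n) ^ k = c ^ k" for n
    using wk by (simp add: power_mult_distrib flip: power_mult) (simp add: mult.commute power_mult)
  have "?t n \<noteq> 0" for n
    using tk[of n] c by auto
  then have expand: "(c ^ k - 1) / ?t n ^ j =
      (\<Sum>i=1..<j. of_nat (k choose i) * (-1) ^ i / ?t n ^ (j - i))
      + (\<Sum>i=j..k+j. of_nat (k choose i) * (-1) ^ i * ?t n ^ (i - j))" for n
    using binomial_expansion_over_power[OF _ j, of "?t n" k] tk by simp
  have column: "of_nat (k choose i) * (-1) ^ i * (\<Sum>n<k. ?t n ^ (i - j))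
      = of_nat (k choose i) * (-1) ^ i * of_nat k" for i
  proof (cases "i \<le> k")
    case True
    then show ?thesis using j k by (subst sum_power_one_minus_mult_primitive_root[OF w]) auto
  qed (simp add: binomial_eq_0)
  have "(c ^ k - 1) * inverse_power_sum k w c j = (\<Sum>n<k. (c ^ k - 1) / ?t n ^ j)"
    by (simp add: inverse_power_sum_def sum_distrib_left)
  also have "\<dots> = (\<Sum>i=1..<j. of_nat (k choose i) * (-1) ^ i * inverse_power_sum k w c (j - i))
      + (\<Sum>i=j..k+j. of_nat (k choose i) * (-1) ^ i * (\<Sum>n<k. ?t n ^ (i - j)))"
    unfolding expand sum.distrib inverse_power_sum_def
    by (subst (1 2) sum.swap) (simp add: sum_distrib_left)
  also have "(\<Sum>i=j..k+j. of_nat (k choose i) * (-1) ^ i * (\<Sum>n<k. ?t n ^ (i - j)))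
      = of_nat k * (\<Sum>i=j..k+j. of_nat (k choose i) * (-1) ^ i)"
    unfolding column by (simp add: sum_distrib_left mult_ac)
  finally show ?thesis by (simp add: alternating_binomial_sum_from[OF k])
qed

lemma inverse_power_sums_unit_imaginary:
  fixes w c :: complex and s :: real
  assumes w: "primitive_root_of_unity k w" and s: "s = 1 \<or> s = -1" and c: "c ^ k = of_real s * \<i>"
  defines "E \<equiv> inverse_power_sum k w c" and "K \<equiv> of_nat k :: complex" and "z \<equiv> of_real s * \<i>"
  shows "E 1 = K * (1 + z) / 2"
    and "E 2 = K * (1 + z) / 2 - K ^ 2 / 2"
    and "E 3 = K * (1 + z) / 2 - 3 * K ^ 2 / 4 - z * K ^ 3 / 4"
    and "E 4 = K * (1 + z) / 2 - 11 * K ^ 2 / 12 - z * K ^ 3 / 2 + K ^ 4 / 6"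
proof -
  have "c ^ k \<noteq> 1" using c s by (auto simp: complex_eq_iff)
  note R = inverse_power_sum_recurrence[OF w this, folded E_def K_def, unfolded c, folded z_def]
  have z: "z * z = -1" "z * (z * x) = - x" for x
    using s by (auto simp: z_def complex_eq_iff)
  have solve: "X = Y" if "(z - 1) * X = R" "(z - 1) * Y = R" for X Y R
    using that s by (auto simp: z_def complex_eq_iff)
  have ivl_3: "{1..<3::nat} = {1, 2}" "{..<3::nat} = {0, 1, 2}"
    and ivl_4: "{1..<4::nat} = {1, 2, 3}" "{..<4::nat} = {0, 1, 2, 3}" by auto
  have R1: "(z - 1) * E 1 = - K" using R[of 1] by simp
  have R2: "(z - 1) * E 2 = - K * E 1 + K * (K - 1)" using R[of 2]
    by (simp add: K_def numeral_2_eq_2 algebra_simps)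
  have R3: "(z - 1) * E 3 = - K * E 2 + K * (K - 1) / 2 * E 1 - K * (1 - K + K * (K - 1) / 2)"
    using R[of 3, unfolded ivl_3] by (simp add: K_def of_nat_choose_2 algebra_simps)
  have R4: "(z - 1) * E 4 = - K * E 3 + K * (K - 1) / 2 * E 2 - K * (K - 1) * (K - 2) / 6 * E 1
      - K * (1 - K + K * (K - 1) / 2 - K * (K - 1) * (K - 2) / 6)"
    using R[of 4, unfolded ivl_4]
    by (simp add: K_def of_nat_choose_2 of_nat_choose_3 choose_one field_simps flip: One_nat_def)
  show e1: "E 1 = K * (1 + z) / 2"
    by (rule solve[OF R1]) (simp add: algebra_simps z)
  show e2: "E 2 = K * (1 + z) / 2 - K ^ 2 / 2"
    by (rule solve[OF R2[unfolded e1]]) (simp add: field_simps power2_eq_square z)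
  show e3: "E 3 = K * (1 + z) / 2 - 3 * K ^ 2 / 4 - z * K ^ 3 / 4"
    by (rule solve[OF R3[unfolded e1 e2]]) (simp add: field_simps power2_eq_square power3_eq_cube z)
  show "E 4 = K * (1 + z) / 2 - 11 * K ^ 2 / 12 - z * K ^ 3 / 2 + K ^ 4 / 6"
    by (rule solve[OF R4[unfolded e1 e2 e3]])
      (simp add: field_simps power2_eq_square power3_eq_cube power4_eq_xxxx z)
qed

lemma cos_half_sq_div_cos_pow4_partial_fractions:
  assumes "cos \<theta> \<noteq> 0"
  defines "a \<equiv> 1 / (1 - \<i> * cis \<theta>)" and "b \<equiv> 1 / (1 + \<i> * cis \<theta>)"
  shows "complex_of_real (cos (\<theta> / 2) ^ 2 / cos \<theta> ^ 4) =
    a ^ 4 / 2 + b ^ 4 / 2 + (-1 + \<i> / 2) * a ^ 3 + (-1 - \<i> / 2) * b ^ 3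
    + (1 - 3 * \<i>) / 4 * a\<^sup>2 + (1 + 3 * \<i>) / 4 * b\<^sup>2 + (a + b) / 4"
proof -
  define y where "y = \<i> * cis \<theta>"
  define C where "C = complex_of_real (cos \<theta>)"
  have C0: "C \<noteq> 0" using assms by (simp add: C_def)
  have yC: "2 * y * C = \<i> * (1 - y\<^sup>2)"
    by (simp add: y_def C_def complex_eq_iff power2_eq_square cos_double sin_double algebra_simps)
  moreover have "y \<noteq> 0" by (simp add: y_def)
  ultimately have "(1 - y) * (1 + y) \<noteq> 0"
    using C0 by (auto simp: power2_eq_square algebra_simps)
  then have "a * (1 - y) = 1" "b * (1 + y) = 1"
    by (auto simp: a_def b_def y_def)
  then have P: "1 + C = 2 * C ^ 4 * (a ^ 4 / 2 + b ^ 4 / 2 + (-1 + \<i> / 2) * a ^ 3 + (-1 - \<i> / 2) * b ^ 3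
      + (1 - 3 * \<i>) / 4 * a\<^sup>2 + (1 + 3 * \<i>) / 4 * b\<^sup>2 + (a + b) / 4)"
    using yC complex_i_mult_minus[of 1] by algebra
  have "cos (\<theta> / 2) ^ 2 / cos \<theta> ^ 4 = (1 + cos \<theta>) / (2 * cos \<theta> ^ 4)"
    using cos_double_cos[of "\<theta> / 2"] by simp
  then have "complex_of_real (cos (\<theta> / 2) ^ 2 / cos \<theta> ^ 4) = (1 + C) / (2 * C ^ 4)"
    unfolding C_def by simp
  also have "\<dots> = a ^ 4 / 2 + b ^ 4 / 2 + (-1 + \<i> / 2) * a ^ 3 + (-1 - \<i> / 2) * b ^ 3
      + (1 - 3 * \<i>) / 4 * a\<^sup>2 + (1 + 3 * \<i>) / 4 * b\<^sup>2 + (a + b) / 4"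
    unfolding P using C0 by simp
  finally show ?thesis .
qed

lemma cos_2pi_div_odd_neq_0:
  assumes "odd k"
  shows "cos (2 * pi * real n / real k) \<noteq> 0"
proof
  assume "cos (2 * pi * real n / real k) = 0"
  then obtain m :: int where "2 * pi * real n / real k = m * pi + pi / 2"
    by (auto simp: cos_zero_iff_int2)
  moreover have "real k > 0" using assms by (cases k) auto
  ultimately have "pi * (4 * real n) = pi * (real k * (2 * m + 1))"
    by (simp add: field_simps)
  then have "real_of_int (4 * int n) = real_of_int (int k * (2 * m + 1))"
    by simp
  then have "4 * int n = int k * (2 * m + 1)"
    by (simp only: of_int_eq_iff)
  then have "odd (4 * int n)" using assms by simp
  then show False by simp
qed

lemma sum_cos_ratio_eq_inverse_power_sums:
  assumes odd: "odd k"
  defines "A \<equiv> inverse_power_sum k (cis (2 * pi / k)) \<i>"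
    and "B \<equiv> inverse_power_sum k (cis (2 * pi / k)) (- \<i>)"
  shows "complex_of_real (\<Sum>n=1..k. cos (pi * real n / real k) ^ 2 / cos (2 * pi * real n / real k) ^ 4) =
    A 4 / 2 + B 4 / 2 + (-1 + \<i> / 2) * A 3 + (-1 - \<i> / 2) * B 3
    + (1 - 3 * \<i>) / 4 * A 2 + (1 + 3 * \<i>) / 4 * B 2 + (A 1 + B 1) / 4"
proof -
  define \<omega> where "\<omega> = cis (2 * pi / k)"
  define a where "a n = 1 / (1 - \<i> * \<omega> ^ n)" for n
  define b where "b n = 1 / (1 - (- \<i>) * \<omega> ^ n)" for n
  define g where "g n = a n ^ 4 / 2 + b n ^ 4 / 2 + (-1 + \<i> / 2) * a n ^ 3 + (-1 - \<i> / 2) * b n ^ 3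
    + (1 - 3 * \<i>) / 4 * a n ^ 2 + (1 + 3 * \<i>) / 4 * b n ^ 2 + (a n + b n) / 4" for n
  have k: "0 < k" using odd by (cases k) auto
  have "complex_of_real (cos (pi * real n / real k) ^ 2 / cos (2 * pi * real n / real k) ^ 4) = g n" for n
  proof -
    have "cis (2 * pi * real n / real k) = \<omega> ^ n"
      by (simp add: \<omega>_def DeMoivre mult_ac)
    then show ?thesis
      using cos_half_sq_div_cos_pow4_partial_fractions[OF cos_2pi_div_odd_neq_0[OF odd, of n]]
      by (simp add: g_def a_def b_def)
  qed
  then have "complex_of_real (\<Sum>n=1..k. cos (pi * real n / real k) ^ 2 / cos (2 * pi * real n / real k) ^ 4)
      = (\<Sum>n=1..k. g n)"
    by simp
  also have "\<dots> = (\<Sum>n<k. g n)"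
  proof -
    have "g k = g 0" using k by (simp add: g_def a_def b_def \<omega>_def DeMoivre)
    moreover have "{1..k} = insert k {1..<k}" "{..<k} = insert 0 {1..<k}" using k by auto
    ultimately show ?thesis by simp
  qed
  also have "\<dots> = A 4 / 2 + B 4 / 2 + (-1 + \<i> / 2) * A 3 + (-1 - \<i> / 2) * B 3
      + (1 - 3 * \<i>) / 4 * A 2 + (1 + 3 * \<i>) / 4 * B 2 + (A 1 + B 1) / 4"
    unfolding g_def A_def B_def inverse_power_sum_def a_def b_def \<omega>_def power_one_over
    by (simp add: sum.distrib sum_distrib_left sum_divide_distrib add_divide_distrib)
  finally show ?thesis .
qed

lemma i_power_odd:
  assumes "odd k"
  shows "\<i> ^ k = (if k mod 4 = 1 then \<i> else - \<i>)"
proof -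
  have "k mod 4 = 1 \<or> k mod 4 = 3" using assms by presburger
  moreover have "\<i> ^ k = (\<i> ^ 4) ^ (k div 4) * \<i> ^ (k mod 4)"
    by (metis div_mult_mod_eq mult.commute power_add power_mult)
  moreover have "\<i> ^ 4 = (1 :: complex)" by (simp add: power4_eq_xxxx)
  ultimately show ?thesis by (auto simp: power3_eq_cube)
qed

theorem mainTheorem1:
  fixes k :: nat
  assumes "odd k"
  shows "(\<Sum>n=1..k. cos (pi * real n / real k) ^ 2 / cos (2 * pi * real n / real k) ^ 4) =
    (if k mod 4 = 1
     then real k / 12 * (3 + 4 * real k + 3 * real k ^ 2 + 2 * real k ^ 3)
     else real k / 12 * (- 3 + 4 * real k - 3 * real k ^ 2 + 2 * real k ^ 3))"
proof -
  have k: "0 < k" using assms by (cases k) auto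
  define s :: real where "s = (if k mod 4 = 1 then 1 else -1)"
  have s: "s = 1 \<or> s = -1" "- s = 1 \<or> - s = -1" by (auto simp: s_def)
  have "\<i> ^ k = of_real s * \<i>" "(- \<i>) ^ k = of_real (- s) * \<i>"
    using i_power_odd[OF assms] assms by (auto simp: s_def power_minus_odd)
  note A = inverse_power_sums_unit_imaginary[OF primitive_root_of_unity_cis[OF k] s(1) this(1)]
    and B = inverse_power_sums_unit_imaginary[OF primitive_root_of_unity_cis[OF k] s(2) this(2)]
  have "complex_of_real (\<Sum>n=1..k. cos (pi * real n / real k) ^ 2 / cos (2 * pi * real n / real k) ^ 4) =
    complex_of_real (if k mod 4 = 1
     then real k / 12 * (3 + 4 * real k + 3 * real k ^ 2 + 2 * real k ^ 3)
     else real k / 12 * (- 3 + 4 * real k - 3 * real k ^ 2 + 2 * real k ^ 3))"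
    unfolding sum_cos_ratio_eq_inverse_power_sums[OF assms] A B
    by (auto simp: s_def complex_eq_iff field_simps power2_eq_square power3_eq_cube power4_eq_xxxx)
  then show ?thesis by (simp only: of_real_eq_iff)
qed

end
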